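(* Let $a(n,m,\Gamma_{sp})$ be the number of single-peaked $(n,m)$-elections on the candidate set $\{c_1,\ldots,c_m\}$. Then (i) $a(2,m,\Gamma_{sp})=m!\binom{2m-2}{m-1}$ for all $m\ge 1$; (ii) $a(n,3,\Gamma_{sp})=6\cdot 2^{n-1}(2^n-1)$ for all $n\ge 1$; (iii) $a(n,4,\Gamma_{sp})=24\cdot 4^{n-1}(2^{n+1}-3)$ for all $n\ge 1$.
   Context: An $(n,m)$-election $(C,\mathcal{P})$ is a set $C$ of $m$ candidates with an ordered $n$-tuple $\mathcal{P}=(V_1,\ldots,V_n)$ of total orders (votes) on $C$ (elections differing only in the order of votes are distinct). Given a total order $A$ on $C$ (an axis), a vote $V$ contains a valley with respect to $A$ on candidates $c_1,c_2,c_3$ if $c_2$ lies strictly between $c_1$ and $c_3$ in $A$ and $V$ ranks $c_2$ below both $c_1$ and $c_3$. The election is single-peaked with respect to $A$ if no vote contains a valley with respect to $A$, and single-peaked if it is single-peaked with respect to some total order $A$ on $C$. *)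

theory Defs
  imports Main
begin

text \<open>Total orders on C are relations r with linear_order_on C r (library notion, reflexive).
  For an axis A, (x,y) in A means x is at or left of y.\<close>

definition strictly_between :: "'a rel \<Rightarrow> 'a \<Rightarrow> 'a \<Rightarrow> 'a \<Rightarrow> bool" where
  "strictly_between A c1 c2 c3 \<longleftrightarrow>
     ((c1,c2) \<in> A \<and> c1 \<noteq> c2 \<and> (c2,c3) \<in> A \<and> c2 \<noteq> c3) \<or>
     ((c3,c2) \<in> A \<and> c3 \<noteq> c2 \<and> (c2,c1) \<in> A \<and> c2 \<noteq> c1)"

text \<open>Vote V: (x,y) \<in> V means x is ranked below or equal to y.\<close>
definition ranked_below :: "'a rel \<Rightarrow> 'a \<Rightarrow> 'a \<Rightarrow> bool" where
  "ranked_below V x y \<longleftrightarrow> (x,y) \<in> V \<and> x \<noteq> y"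

definition has_valley :: "'a rel \<Rightarrow> 'a rel \<Rightarrow> 'a \<Rightarrow> 'a \<Rightarrow> 'a \<Rightarrow> bool" where
  "has_valley A V c1 c2 c3 \<longleftrightarrow>
     strictly_between A c1 c2 c3 \<and> ranked_below V c2 c1 \<and> ranked_below V c2 c3"

definition single_peaked_wrt :: "'a set \<Rightarrow> 'a rel list \<Rightarrow> 'a rel \<Rightarrow> bool" where
  "single_peaked_wrt C P A \<longleftrightarrow>
     (\<forall>V \<in> set P. \<not> (\<exists>c1\<in>C. \<exists>c2\<in>C. \<exists>c3\<in>C. has_valley A V c1 c2 c3))"

definition single_peaked :: "'a set \<Rightarrow> 'a rel list \<Rightarrow> bool" where
  "single_peaked C P \<longleftrightarrow> (\<exists>A. linear_order_on C A \<and> single_peaked_wrt C P A)"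

definition elections :: "nat \<Rightarrow> 'a set \<Rightarrow> 'a rel list set" where
  "elections n C = {P. length P = n \<and> (\<forall>V \<in> set P. linear_order_on C V)}"

text \<open>Candidates c_1..c_m are represented as 1..m.\<close>
definition a_sp :: "nat \<Rightarrow> nat \<Rightarrow> nat" where
  "a_sp n m = card {P \<in> elections n {1..m}. single_peaked {1..m} P}"

end

theory Submission
  imports Defs "HOL-Combinatorics.Multiset_Permutations"
begin

text \<open>Write votes and axes as lists of candidates. A vote is single-peaked with respect to an axis iff,
  going through its candidates from the worst upwards, each one is an end of what remains of the
  axis. An election is then a list of votes that all peel one common axis.

  For three and four candidates the number of such lists of \<open>n\<close> votes satisfies a linear recursion
  indexed by the family of axes still compatible with the votes chosen so far; a finite certificate
  shows that along this recursion the counts are combinations of two geometric sequences.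

  For two votes, the worst candidate \<open>x\<close> of the first vote is an end of the axis. Removing \<open>x\<close>
  from both votes gives a recursion for the number of pairs in which, moreover, the second vote
  starts by peeling a prescribed number of candidates off one end of the axis. Its solution is a
  band of binomial coefficients that reduces to the central binomial coefficient when nothing is
  prescribed.\<close>

section \<open>Total orders as lists\<close>

fun precedes :: "'a list \<Rightarrow> 'a \<Rightarrow> 'a \<Rightarrow> bool" where
  "precedes [] a b = False"
| "precedes (x # xs) a b = ((a = x \<and> b \<in> set xs) \<or> precedes xs a b)"

lemma precedes_in_set: "precedes xs a b \<Longrightarrow> a \<in> set xs \<and> b \<in> set xs"
  by (induction xs) auto

lemma precedes_append:
  "precedes (xs @ ys) a b \<longleftrightarrow> precedes xs a b \<or> precedes ys a b \<or> (a \<in> set xs \<and> b \<in> set ys)"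
  by (induction xs) (auto dest: precedes_in_set)

lemma precedes_snoc: "precedes (xs @ [x]) a b \<longleftrightarrow> precedes xs a b \<or> (a \<in> set xs \<and> b = x)"
  by (simp add: precedes_append)

lemma precedes_neq: "distinct xs \<Longrightarrow> precedes xs a b \<Longrightarrow> a \<noteq> b"
  by (induction xs) (auto dest: precedes_in_set)

lemma precedes_asym: "distinct xs \<Longrightarrow> precedes xs a b \<Longrightarrow> precedes xs b a \<Longrightarrow> False"
  by (induction xs) (auto dest: precedes_in_set)

lemma precedes_trans: "distinct xs \<Longrightarrow> precedes xs a b \<Longrightarrow> precedes xs b c \<Longrightarrow> precedes xs a c"
  by (induction xs) (auto dest: precedes_in_set)

lemma precedes_total:
  "a \<in> set xs \<Longrightarrow> b \<in> set xs \<Longrightarrow> a \<noteq> b \<Longrightarrow> precedes xs a b \<or> precedes xs b a"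
  by (induction xs) auto

text \<open>A list is read from its least to its greatest element; for a vote this means from the
  worst to the best candidate, for an axis from left to right.\<close>

definition order_of_list :: "'a list \<Rightarrow> 'a rel" where
  "order_of_list xs = {(a, b). (a = b \<and> a \<in> set xs) \<or> precedes xs a b}"

lemma order_of_list_strict:
  "distinct xs \<Longrightarrow> ((a, b) \<in> order_of_list xs \<and> a \<noteq> b) \<longleftrightarrow> precedes xs a b"
  unfolding order_of_list_def by (auto dest: precedes_neq)

lemma order_of_list_snoc:
  "order_of_list (xs @ [x]) = order_of_list xs \<union> {(a, x) | a. a \<in> insert x (set xs)}"
  unfolding order_of_list_def by (auto simp: precedes_snoc)

lemma linear_order_on_order_of_list:
  "distinct xs \<Longrightarrow> linear_order_on (set xs) (order_of_list xs)"
  unfolding linear_order_on_def partial_order_on_def preorder_on_def order_of_list_def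
    refl_on_def trans_def antisym_on_def total_on_def
  by (auto dest: precedes_in_set precedes_asym precedes_trans precedes_total)

lemma order_of_list_subset: "order_of_list xs \<subseteq> set xs \<times> set xs"
  unfolding order_of_list_def by (auto dest: precedes_in_set)

lemma refl_order_of_list: "(a, a) \<in> order_of_list xs \<longleftrightarrow> a \<in> set xs"
  unfolding order_of_list_def by (auto dest: precedes_in_set)

lemma order_of_list_Cons:
  "order_of_list (x # xs) = {(x, b) | b. b \<in> insert x (set xs)} \<union> order_of_list xs"
  unfolding order_of_list_def by auto

lemma order_of_list_inj:
  assumes "distinct xs" "distinct ys" "order_of_list xs = order_of_list ys"
  shows "xs = ys"
  using assms
proof (induction xs arbitrary: ys)
  case Nil
  then show ?case by (cases ys) (auto simp: order_of_list_def)
next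
  case (Cons x xs)
  have set_eq: "set ys = set (x # xs)"
    using Cons.prems(3) by (metis refl_order_of_list subsetI subset_antisym)
  then obtain y ys' where ys: "ys = y # ys'"
    by (cases ys) auto
  have "x = y"
  proof (rule ccontr)
    assume "x \<noteq> y"
    with set_eq ys have "precedes (x # xs) x y" "precedes ys y x"
      by auto
    with Cons.prems show False
      by (metis order_of_list_strict precedes_asym)
  qed
  have drop_head: "order_of_list zs = order_of_list (x # zs) - {x} \<times> UNIV" if "x \<notin> set zs" for zs
    using that order_of_list_subset[of zs] by (auto simp: order_of_list_Cons)
  have "order_of_list xs = order_of_list ys'"
    using drop_head[of xs] drop_head[of ys'] Cons.prems ys \<open>x = y\<close> by simp
  then show ?case
    using Cons ys \<open>x = y\<close> by simp
qed

lemma total_preorder_has_greatest: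
  assumes "finite C" "C \<noteq> {}" "total_on C V" "refl_on C V" "trans V"
  shows "\<exists>b\<in>C. \<forall>a\<in>C. (a, b) \<in> V"
  using assms
proof (induction C rule: finite_ne_induct)
  case (singleton x)
  then show ?case by (auto simp: refl_on_def)
next
  case (insert x F)
  then obtain b where b: "b \<in> F" "\<forall>a\<in>F. (a, b) \<in> V"
    by (auto simp: total_on_def refl_on_def)
  show ?case
  proof (cases "(b, x) \<in> V")
    case True
    then show ?thesis using b insert.prems unfolding trans_def refl_on_def by blast
  next
    case False
    with b insert.hyps insert.prems have "(x, b) \<in> V"
      unfolding total_on_def by (metis insertCI)
    then show ?thesis using b by blast
  qed
qed

lemma linear_order_on_remove_greatest:
  assumes "linear_order_on C V" "b \<in> C" "\<forall>a\<in>C. (a, b) \<in> V"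
  defines "V' \<equiv> V \<inter> (C - {b}) \<times> (C - {b})"
  shows "linear_order_on (C - {b}) V'" and "V = V' \<union> {(a, b) | a. a \<in> C}"
proof -
  have lo: "V \<subseteq> C \<times> C" "refl_on C V" "trans V" "antisym V" "total_on C V"
    using assms(1) by (auto simp: linear_order_on_def partial_order_on_def preorder_on_def)
  show "linear_order_on (C - {b}) V'"
    using lo unfolding V'_def linear_order_on_def partial_order_on_def preorder_on_def
      refl_on_def trans_def antisym_on_def total_on_def by blast
  have "a = b" if "(b, a) \<in> V" for a
    using that assms(3) lo(1,4) unfolding antisym_on_def by blast
  then show "V = V' \<union> {(a, b) | a. a \<in> C}"
    using lo(1) assms(3) unfolding V'_def by blast
qed

lemma linear_order_on_eq_order_of_list:
  assumes "finite C" "linear_order_on C V"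
  shows "\<exists>xs\<in>permutations_of_set C. V = order_of_list xs"
  using assms
proof (induction "card C" arbitrary: C V)
  case 0
  then have "C = {}" "V = {}"
    by (auto simp: linear_order_on_def partial_order_on_def preorder_on_def)
  then show ?case by (simp add: order_of_list_def)
next
  case (Suc n)
  obtain b where b: "b \<in> C" "\<forall>a\<in>C. (a, b) \<in> V"
    using total_preorder_has_greatest[of C V] Suc.hyps(2) Suc.prems
    by (force simp: linear_order_on_def partial_order_on_def preorder_on_def)
  note V' = linear_order_on_remove_greatest[OF Suc.prems(2) b]
  obtain xs where xs: "xs \<in> permutations_of_set (C - {b})" "V \<inter> (C - {b}) \<times> (C - {b}) = order_of_list xs"
    using Suc.hyps Suc.prems(1) b(1) V'(1) by (metis card_Diff_singleton diff_Suc_1 finite_Diff)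
  then have "xs @ [b] \<in> permutations_of_set C" "V = order_of_list (xs @ [b])"
    using V'(2) b(1) by (auto simp: permutations_of_set_def order_of_list_snoc)
  then show ?case by blast
qed

lemma bij_betw_order_of_list:
  assumes "finite C"
  shows "bij_betw order_of_list (permutations_of_set C) {V. linear_order_on C V}"
proof (rule bij_betw_imageI)
  show "inj_on order_of_list (permutations_of_set C)"
    by (rule inj_onI) (auto simp: permutations_of_set_def intro: order_of_list_inj)
  show "order_of_list ` permutations_of_set C = {V. linear_order_on C V}"
    using linear_order_on_eq_order_of_list[OF assms]
    by (auto simp: permutations_of_set_def linear_order_on_order_of_list)
qed

section \<open>Single-peakedness as peeling\<close>

fun peels :: "'a list \<Rightarrow> 'a list \<Rightarrow> bool" where
  "peels [] A \<longleftrightarrow> A = []"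
| "peels (x # v) A \<longleftrightarrow>
     A \<noteq> [] \<and> ((hd A = x \<and> peels v (tl A)) \<or> (last A = x \<and> peels v (butlast A)))"

lemma peels_Cons_iff: "peels (x # v) A \<longleftrightarrow> (\<exists>A'. (A = x # A' \<or> A = A' @ [x]) \<and> peels v A')"
proof
  assume "peels (x # v) A"
  then show "\<exists>A'. (A = x # A' \<or> A = A' @ [x]) \<and> peels v A'"
    by (metis append_butlast_last_id list.collapse peels.simps(2))
qed auto

lemma peels_rev: "peels v (rev A) \<longleftrightarrow> peels v A"
proof (induction v arbitrary: A)
  case (Cons x v)
  have "(rev A = x # A' \<or> rev A = A' @ [x]) \<longleftrightarrow> (A = rev A' @ [x] \<or> A = x # rev A')" for A'
    by (metis rev.simps(2) rev_rev_ident rev_singleton_conv rev_append)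
  then show ?case
    using Cons.IH by (metis peels_Cons_iff rev_rev_ident)
qed simp

definition valley_free :: "'a list \<Rightarrow> 'a list \<Rightarrow> bool" where
  "valley_free v A \<longleftrightarrow> \<not> (\<exists>c1 c2 c3.
     (precedes A c1 c2 \<and> precedes A c2 c3 \<or> precedes A c3 c2 \<and> precedes A c2 c1)
       \<and> precedes v c2 c1 \<and> precedes v c2 c3)"

lemma valley_free_end:
  assumes "valley_free (x # v) A" "distinct A" "x \<in> set A" "set A \<subseteq> insert x (set v)"
  shows "\<exists>A'. A = x # A' \<or> A = A' @ [x]"
proof -
  obtain u w where A: "A = u @ x # w"
    using split_list[OF assms(3)] by blast
  show ?thesis
  proof (cases "u = [] \<or> w = []")
    case False
    then have "last u \<in> set u" "hd w \<in> set w"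
      by auto
    then have "last u \<in> set v" "hd w \<in> set v" "precedes A (last u) x" "precedes A x (hd w)"
      using assms(2,4) A by (auto simp: precedes_append)
    with assms(1) show ?thesis
      unfolding valley_free_def by auto
  qed (use A in auto)
qed

lemma valley_free_remove_end:
  assumes "valley_free (x # v) A" "A = x # A' \<or> A = A' @ [x]"
  shows "valley_free v A'"
proof -
  have "precedes A a b" if "precedes A' a b" for a b
    using assms(2) that by (auto simp: precedes_snoc)
  moreover have "precedes (x # v) a b" if "precedes v a b" for a b
    using that by simp
  ultimately show ?thesis
    using assms(1) unfolding valley_free_def by meson
qed

lemma valley_free_add_end:
  assumes "valley_free v A'" "x \<notin> set v" "x \<notin> set A'" "A = x # A' \<or> A = A' @ [x]"
  shows "valley_free (x # v) A"
  unfolding valley_free_def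
proof (intro notI, elim exE conjE)
  fix c1 c2 c3
  assume between: "precedes A c1 c2 \<and> precedes A c2 c3 \<or> precedes A c3 c2 \<and> precedes A c2 c1"
    and below: "precedes (x # v) c2 c1" "precedes (x # v) c2 c3"
  show False
  proof (cases "c2 = x")
    case True
    then show False
      using between assms(3,4) by (auto simp: precedes_snoc dest: precedes_in_set)
  next
    case False
    then have "precedes v c2 c1" "precedes v c2 c3"
      using below by auto
    moreover from this have "c1 \<noteq> x" "c3 \<noteq> x"
      using assms(2) by (auto dest: precedes_in_set)
    then have "precedes A' c1 c2 \<and> precedes A' c2 c3 \<or> precedes A' c3 c2 \<and> precedes A' c2 c1"
      using between assms(4) False by (auto simp: precedes_snoc)
    ultimately show False
      using assms(1) unfolding valley_free_def by blast
  qed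
qed

lemma valley_free_iff_peels:
  assumes "distinct v" "distinct A" "set v = set A"
  shows "valley_free v A \<longleftrightarrow> peels v A"
  using assms
proof (induction v arbitrary: A)
  case Nil
  then show ?case by (simp add: valley_free_def)
next
  case (Cons x v)
  show ?case
  proof
    assume vf: "valley_free (x # v) A"
    then obtain A' where A': "A = x # A' \<or> A = A' @ [x]"
      using valley_free_end Cons.prems by (metis equalityD2 list.set(2) list.set_intros(1))
    with Cons.prems have "peels v A'"
      by (intro Cons.IH[THEN iffD1] valley_free_remove_end[OF vf]) auto
    with A' show "peels (x # v) A"
      by (auto simp: peels_Cons_iff)
  next
    assume "peels (x # v) A"
    then obtain A' where A': "A = x # A' \<or> A = A' @ [x]" "peels v A'"
      by (metis peels_Cons_iff)
    with Cons.prems show "valley_free (x # v) A"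
      by (intro valley_free_add_end[of v A'] Cons.IH[THEN iffD2]) auto
  qed
qed

lemma has_valley_order_of_list:
  assumes "distinct v" "distinct A"
  shows "has_valley (order_of_list A) (order_of_list v) c1 c2 c3 \<longleftrightarrow>
     (precedes A c1 c2 \<and> precedes A c2 c3 \<or> precedes A c3 c2 \<and> precedes A c2 c1)
       \<and> precedes v c2 c1 \<and> precedes v c2 c3"
  unfolding has_valley_def strictly_between_def ranked_below_def
  using order_of_list_strict[OF assms(1)] order_of_list_strict[OF assms(2)] by blast

lemma no_valley_iff_peels:
  assumes "v \<in> permutations_of_set C" "A \<in> permutations_of_set C"
  shows "\<not> (\<exists>c1\<in>C. \<exists>c2\<in>C. \<exists>c3\<in>C. has_valley (order_of_list A) (order_of_list v) c1 c2 c3)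
     \<longleftrightarrow> peels v A"
proof -
  have "distinct v" "distinct A" "set v = C" "set A = C"
    using assms by (auto simp: permutations_of_set_def)
  then have "valley_free v A \<longleftrightarrow> peels v A"
    by (intro valley_free_iff_peels) auto
  with \<open>set v = C\<close> show ?thesis
    unfolding has_valley_order_of_list[OF \<open>distinct v\<close> \<open>distinct A\<close>] valley_free_def
    by (blast dest: precedes_in_set)
qed

definition peeling_profiles :: "'a list set \<Rightarrow> 'a list set \<Rightarrow> nat \<Rightarrow> 'a list list set" where
  "peeling_profiles V X n = {Ps \<in> lists V. length Ps = n \<and> (\<exists>A\<in>X. \<forall>v\<in>set Ps. peels v A)}"

lemma single_peaked_map_order_of_list:
  assumes "finite C" "Ps \<in> lists (permutations_of_set C)"
  shows "single_peaked C (map order_of_list Ps) \<longleftrightarrow>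
    (\<exists>A\<in>permutations_of_set C. \<forall>v\<in>set Ps. peels v A)"
proof -
  have "single_peaked C P \<longleftrightarrow>
      (\<exists>A\<in>permutations_of_set C. single_peaked_wrt C P (order_of_list A))" for P
    using bij_betw_order_of_list[OF assms(1)] unfolding single_peaked_def bij_betw_def
    by (metis (mono_tags, lifting) image_iff mem_Collect_eq)
  then have "single_peaked C (map order_of_list Ps) \<longleftrightarrow>
      (\<exists>A\<in>permutations_of_set C. single_peaked_wrt C (map order_of_list Ps) (order_of_list A))" .
  moreover have "single_peaked_wrt C (map order_of_list Ps) (order_of_list A) \<longleftrightarrow>
      (\<forall>v\<in>set Ps. peels v A)" if "A \<in> permutations_of_set C" for A
    using no_valley_iff_peels[OF _ that] assms(2) by (simp add: single_peaked_wrt_def in_lists_conv_set)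
  ultimately show ?thesis
    by simp
qed

lemma card_single_peaked_elections:
  assumes "finite C"
  shows "card {P \<in> elections n C. single_peaked C P}
       = card (peeling_profiles (permutations_of_set C) (permutations_of_set C) n)"
proof -
  let ?\<pi> = "permutations_of_set C"
  have bij: "bij_betw order_of_list ?\<pi> {V. linear_order_on C V}"
    using bij_betw_order_of_list[OF assms] .
  have "elections n C = {P \<in> map order_of_list ` lists ?\<pi>. length P = n}"
    using bij unfolding elections_def bij_betw_def by (auto simp flip: lists_image)
  then have "{P \<in> elections n C. single_peaked C P} = map order_of_list ` peeling_profiles ?\<pi> ?\<pi> n"
    using single_peaked_map_order_of_list[OF assms]
    by (auto simp: peeling_profiles_def in_lists_conv_set intro!: image_eqI)
  moreover have "inj_on (map order_of_list) (peeling_profiles ?\<pi> ?\<pi> n)"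
    using inj_on_map_lists[of order_of_list ?\<pi>] bij
    by (auto simp: bij_betw_def peeling_profiles_def intro: inj_on_subset)
  ultimately show ?thesis
    by (simp add: card_image)
qed

section \<open>Counting profiles of many votes\<close>

lemma finite_peeling_profiles: "finite V \<Longrightarrow> finite (peeling_profiles V X n)"
  unfolding peeling_profiles_def
  by (rule finite_subset[OF _ finite_lists_length_eq[of V n]]) (auto simp: in_lists_conv_set)

lemma peeling_profiles_0: "peeling_profiles V X 0 = (if X = {} then {} else {[]})"
  by (auto simp: peeling_profiles_def)

lemma peeling_profiles_Suc:
  "peeling_profiles V X (Suc n) = (\<Union>v\<in>V. (#) v ` peeling_profiles V {A \<in> X. peels v A} n)"
  unfolding peeling_profiles_def by (fastforce simp: length_Suc_conv)

lemma card_peeling_profiles_Suc: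
  assumes "finite V"
  shows "card (peeling_profiles V X (Suc n)) = (\<Sum>v\<in>V. card (peeling_profiles V {A \<in> X. peels v A} n))"
  unfolding peeling_profiles_Suc
  by (subst card_UN_disjoint) (auto simp: assms finite_peeling_profiles card_image)

lemma card_peeling_profiles_closed_form:
  fixes R :: "'a list list list" and a b :: "nat \<Rightarrow> int" and r s :: int
  assumes "finite V"
    and closed: "\<forall>T\<in>set R. \<forall>v\<in>V. filter (peels v) T \<in> set R"
    and base: "\<forall>T\<in>set R. a (length T) - b (length T) = (if T = [] then 0 else 1)"
    and eigen: "\<forall>T\<in>set R. (\<Sum>v\<in>V. a (length (filter (peels v) T))) = r * a (length T)
                         \<and> (\<Sum>v\<in>V. b (length (filter (peels v) T))) = s * b (length T)"
    and "T \<in> set R"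
  shows "int (card (peeling_profiles V (set T) n)) = a (length T) * r ^ n - b (length T) * s ^ n"
  using \<open>T \<in> set R\<close>
proof (induction n arbitrary: T)
  case 0
  then show ?case
    using base by (simp add: peeling_profiles_0)
next
  case (Suc n)
  have "int (card (peeling_profiles V (set T) (Suc n)))
      = (\<Sum>v\<in>V. int (card (peeling_profiles V (set (filter (peels v) T)) n)))"
    by (simp add: card_peeling_profiles_Suc[OF assms(1)])
  also have "\<dots> = (\<Sum>v\<in>V. a (length (filter (peels v) T)) * r ^ n - b (length (filter (peels v) T)) * s ^ n)"
  proof (rule sum.cong)
    fix v assume "v \<in> V"
    then show "int (card (peeling_profiles V (set (filter (peels v) T)) n))
        = a (length (filter (peels v) T)) * r ^ n - b (length (filter (peels v) T)) * s ^ n"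
      using Suc.IH[of "filter (peels v) T"] closed Suc.prems by simp
  qed simp
  also have "\<dots> = a (length T) * r ^ Suc n - b (length T) * s ^ Suc n"
    using eigen Suc.prems by (simp add: sum_subtractf flip: sum_distrib_right)
  finally show ?case .
qed

lemma card_peeling_profiles_Suc_closed_form:
  fixes R :: "'a list list list" and P :: "'a list list" and a b :: "nat \<Rightarrow> int" and r s :: int
  assumes "\<forall>T\<in>set R. \<forall>v\<in>set P. filter (peels v) T \<in> set R"
    and "\<forall>T\<in>set R. a (length T) - b (length T) = (if T = [] then 0 else 1)"
    and "\<forall>T\<in>set R. (\<Sum>v\<in>set P. a (length (filter (peels v) T))) = r * a (length T)
                    \<and> (\<Sum>v\<in>set P. b (length (filter (peels v) T))) = s * b (length T)"
    and first: "\<forall>v\<in>set P. filter (peels v) P \<in> set R \<and> length (filter (peels v) P) = l"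
  shows "int (card (peeling_profiles (set P) (set P) (Suc n)))
       = int (card (set P)) * (a l * r ^ n - b l * s ^ n)"
proof -
  have "int (card (peeling_profiles (set P) (set P) (Suc n)))
      = (\<Sum>v\<in>set P. int (card (peeling_profiles (set P) (set (filter (peels v) P)) n)))"
    by (simp add: card_peeling_profiles_Suc)
  also have "\<dots> = (\<Sum>v\<in>set P. a l * r ^ n - b l * s ^ n)"
  proof (rule sum.cong)
    fix v assume "v \<in> set P"
    then show "int (card (peeling_profiles (set P) (set (filter (peels v) P)) n))
        = a l * r ^ n - b l * s ^ n"
      using card_peeling_profiles_closed_form[OF _ assms(1-3), of "filter (peels v) P"] first by simp
  qed simp
  finally show ?thesis
    by simp
qed

text \<open>For \<open>m = 3, 4\<close> the families of axes arising from the set of all axes by keeping those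
  peeled by given votes are closed under reversal, and a family of \<open>2 j\<close> axes carries
  \<open>j (2 k)\<^sup>n - (j - 1) k\<^sup>n\<close> profiles of \<open>n\<close> votes, where \<open>k = 2\<^sup>m\<^sup>-\<^sup>2\<close>. All lists are in
  lexicographic order, so that filtering reproduces the listed families literally.\<close>

definition axes_3 :: "nat list list" where
  "axes_3 = [[1,2,3],[1,3,2],[2,1,3],[2,3,1],[3,1,2],[3,2,1]]"

definition axis_families_3 :: "nat list list list" where
  "axis_families_3 = [[],
    [[1,2,3],[3,2,1]],
    [[1,3,2],[2,3,1]],
    [[2,1,3],[3,1,2]],
    [[1,2,3],[1,3,2],[2,3,1],[3,2,1]],
    [[1,2,3],[2,1,3],[3,1,2],[3,2,1]],
    [[1,3,2],[2,1,3],[2,3,1],[3,1,2]]]"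

definition axes_4 :: "nat list list" where
  "axes_4 = [[1,2,3,4],[1,2,4,3],[1,3,2,4],[1,3,4,2],[1,4,2,3],[1,4,3,2],[2,1,3,4],[2,1,4,3],[2,3,1,4],[2,3,4,1],[2,4,1,3],[2,4,3,1],[3,1,2,4],[3,1,4,2],[3,2,1,4],[3,2,4,1],[3,4,1,2],[3,4,2,1],[4,1,2,3],[4,1,3,2],[4,2,1,3],[4,2,3,1],[4,3,1,2],[4,3,2,1]]"

definition axis_families_4 :: "nat list list list" where
  "axis_families_4 = [[],
    [[1,2,3,4],[4,3,2,1]],
    [[1,2,4,3],[3,4,2,1]],
    [[1,3,2,4],[4,2,3,1]],
    [[1,3,4,2],[2,4,3,1]],
    [[1,4,2,3],[3,2,4,1]],
    [[1,4,3,2],[2,3,4,1]],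
    [[2,1,3,4],[4,3,1,2]],
    [[2,1,4,3],[3,4,1,2]],
    [[2,3,1,4],[4,1,3,2]],
    [[2,4,1,3],[3,1,4,2]],
    [[3,1,2,4],[4,2,1,3]],
    [[3,2,1,4],[4,1,2,3]],
    [[1,2,3,4],[1,3,2,4],[4,2,3,1],[4,3,2,1]],
    [[1,2,3,4],[1,4,3,2],[2,3,4,1],[4,3,2,1]],
    [[1,2,3,4],[3,2,1,4],[4,1,2,3],[4,3,2,1]],
    [[1,2,4,3],[1,3,4,2],[2,4,3,1],[3,4,2,1]],
    [[1,2,4,3],[1,4,2,3],[3,2,4,1],[3,4,2,1]],
    [[1,2,4,3],[3,1,2,4],[3,4,2,1],[4,2,1,3]],
    [[1,3,2,4],[1,4,2,3],[3,2,4,1],[4,2,3,1]],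
    [[1,3,2,4],[2,3,1,4],[4,1,3,2],[4,2,3,1]],
    [[1,3,4,2],[1,4,3,2],[2,3,4,1],[2,4,3,1]],
    [[1,3,4,2],[2,1,3,4],[2,4,3,1],[4,3,1,2]],
    [[1,4,2,3],[2,4,1,3],[3,1,4,2],[3,2,4,1]],
    [[1,4,3,2],[2,1,4,3],[2,3,4,1],[3,4,1,2]],
    [[2,1,3,4],[2,3,1,4],[4,1,3,2],[4,3,1,2]],
    [[2,1,3,4],[3,1,2,4],[4,2,1,3],[4,3,1,2]],
    [[2,1,4,3],[2,4,1,3],[3,1,4,2],[3,4,1,2]],
    [[2,1,4,3],[3,2,1,4],[3,4,1,2],[4,1,2,3]],
    [[2,3,1,4],[2,4,1,3],[3,1,4,2],[4,1,3,2]],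
    [[3,1,2,4],[3,2,1,4],[4,1,2,3],[4,2,1,3]],
    [[1,2,3,4],[1,2,4,3],[1,3,4,2],[1,4,3,2],[2,3,4,1],[2,4,3,1],[3,4,2,1],[4,3,2,1]],
    [[1,2,3,4],[1,3,2,4],[1,4,2,3],[1,4,3,2],[2,3,4,1],[3,2,4,1],[4,2,3,1],[4,3,2,1]],
    [[1,2,3,4],[1,3,2,4],[2,3,1,4],[3,2,1,4],[4,1,2,3],[4,1,3,2],[4,2,3,1],[4,3,2,1]],
    [[1,2,3,4],[2,1,3,4],[3,1,2,4],[3,2,1,4],[4,1,2,3],[4,2,1,3],[4,3,1,2],[4,3,2,1]],
    [[1,2,4,3],[1,3,2,4],[1,3,4,2],[1,4,2,3],[2,4,3,1],[3,2,4,1],[3,4,2,1],[4,2,3,1]],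
    [[1,2,4,3],[1,4,2,3],[2,4,1,3],[3,1,2,4],[3,1,4,2],[3,2,4,1],[3,4,2,1],[4,2,1,3]],
    [[1,2,4,3],[2,1,4,3],[3,1,2,4],[3,2,1,4],[3,4,1,2],[3,4,2,1],[4,1,2,3],[4,2,1,3]],
    [[1,3,2,4],[2,1,3,4],[2,3,1,4],[3,1,2,4],[4,1,3,2],[4,2,1,3],[4,2,3,1],[4,3,1,2]],
    [[1,3,4,2],[1,4,3,2],[2,1,3,4],[2,1,4,3],[2,3,4,1],[2,4,3,1],[3,4,1,2],[4,3,1,2]],
    [[1,3,4,2],[2,1,3,4],[2,3,1,4],[2,4,1,3],[2,4,3,1],[3,1,4,2],[4,1,3,2],[4,3,1,2]],
    [[1,4,2,3],[2,1,4,3],[2,4,1,3],[3,1,4,2],[3,2,1,4],[3,2,4,1],[3,4,1,2],[4,1,2,3]],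
    [[1,4,3,2],[2,1,4,3],[2,3,1,4],[2,3,4,1],[2,4,1,3],[3,1,4,2],[3,4,1,2],[4,1,3,2]]]"

lemma axes_3: "set axes_3 = permutations_of_set {1..3::nat}"
proof -
  have "permutations_of_set {1..3::nat} = set (permutations_of_set_list (remdups [1, 2, 3]))"
    unfolding permutations_of_list[symmetric] by (rule arg_cong[where f = permutations_of_set]) auto
  also have "\<dots> = set axes_3"
    by code_simp
  finally show ?thesis by simp
qed

lemma axes_4: "set axes_4 = permutations_of_set {1..4::nat}"
proof -
  have "permutations_of_set {1..4::nat} = set (permutations_of_set_list (remdups [1, 2, 3, 4]))"
    unfolding permutations_of_list[symmetric] by (rule arg_cong[where f = permutations_of_set]) auto
  also have "\<dots> = set axes_4"
    by code_simp
  finally show ?thesis by simp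
qed

lemma card_peeling_profiles_3:
  "card (peeling_profiles (permutations_of_set {1..3::nat}) (permutations_of_set {1..3}) (Suc n))
     = 6 * 2 ^ n * (2 ^ Suc n - 1)"
proof -
  have "card (set axes_3) = 6"
    by code_simp
  have "int (card (peeling_profiles (set axes_3) (set axes_3) (Suc n)))
      = int (card (set axes_3)) * (int (4 div 2) * 4 ^ n - int (4 div 2 - 1) * 2 ^ n)"
    by (rule card_peeling_profiles_Suc_closed_form[where R = axis_families_3
          and a = "\<lambda>j. int (j div 2)" and b = "\<lambda>j. int (j div 2 - 1)"]; code_simp)
  also have "\<dots> = 6 * (2 * 2 ^ n * 2 ^ n - 2 ^ n)"
    using \<open>card (set axes_3) = 6\<close> by (simp flip: power_mult_distrib)
  also have "\<dots> = int (6 * 2 ^ n * (2 ^ Suc n - 1))"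
    by (simp add: of_nat_diff algebra_simps)
  finally show ?thesis
    by (simp only: axes_3 of_nat_eq_iff)
qed

lemma card_peeling_profiles_4:
  "card (peeling_profiles (permutations_of_set {1..4::nat}) (permutations_of_set {1..4}) (Suc n))
     = 24 * 4 ^ n * (2 ^ (n + 2) - 3)"
proof -
  have "card (set axes_4) = 24"
    by code_simp
  have "int (card (peeling_profiles (set axes_4) (set axes_4) (Suc n)))
      = int (card (set axes_4)) * (int (8 div 2) * 8 ^ n - int (8 div 2 - 1) * 4 ^ n)"
    by (rule card_peeling_profiles_Suc_closed_form[where R = axis_families_4
          and a = "\<lambda>j. int (j div 2)" and b = "\<lambda>j. int (j div 2 - 1)"]; code_simp)
  also have "\<dots> = 24 * (4 * 2 ^ n * 4 ^ n - 3 * 4 ^ n)"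
    using \<open>card (set axes_4) = 24\<close> by (simp flip: power_mult_distrib)
  also have "\<dots> = int (24 * 4 ^ n * (2 ^ (n + 2) - 3))"
  proof -
    have "(1::nat) \<le> 2 ^ n" "(2::nat) ^ (n + 2) = 4 * 2 ^ n"
      by (simp_all add: power_add)
    then have "(3::nat) \<le> 2 ^ (n + 2)"
      by linarith
    then show ?thesis
      by (simp add: of_nat_diff power_add algebra_simps)
  qed
  finally show ?thesis
    by (simp only: axes_4 of_nat_eq_iff)
qed

section \<open>Profiles of two votes\<close>

definition insert_at :: "nat \<Rightarrow> 'a \<Rightarrow> 'a list \<Rightarrow> 'a list" where
  "insert_at p x ys = take p ys @ x # drop p ys"

lemma insert_at_in_permutations_of_set:
  assumes "x \<notin> C" "ys \<in> permutations_of_set C"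
  shows "insert_at p x ys \<in> permutations_of_set (insert x C)"
proof -
  have "set (take p ys) \<union> set (drop p ys) = set ys"
    by (metis append_take_drop_id set_append)
  with assms set_take_disj_set_drop_if_distinct[of ys p p] show ?thesis
    unfolding insert_at_def permutations_of_set_def by (auto dest: in_set_takeD in_set_dropD)
qed

lemma insert_at_eq_iff:
  assumes "x \<notin> set ys" "x \<notin> set zs" "p \<le> length ys" "q \<le> length zs"
  shows "insert_at p x ys = insert_at q x zs \<longleftrightarrow> p = q \<and> ys = zs"
proof
  assume "insert_at p x ys = insert_at q x zs"
  then have "take p ys = take q zs" "drop p ys = drop q zs"
    using assms(1,2) append_Cons_eq_iff[of x "take p ys" "drop p ys" "take q zs" "drop q zs"]
    unfolding insert_at_def by (auto dest: in_set_takeD in_set_dropD)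
  then show "p = q \<and> ys = zs"
    using assms(3,4) by (metis append_take_drop_id length_take min.absorb2)
qed simp

lemma take_append_Cons_eq_iff:
  assumes "x \<notin> set r" "length w = length r"
  shows "take a (u @ x # w) = take a (u @ r @ [x]) \<longleftrightarrow> a \<le> length u \<or> r = []"
proof (cases "a \<le> length u")
  case False
  then obtain k where a: "a = length u + Suc k"
    by (metis add_Suc_right le_add1 less_imp_Suc_add not_le)
  show ?thesis
  proof (cases r)
    case (Cons y r')
    with assms have "y \<noteq> x"
      by auto
    with Cons a False show ?thesis
      by simp
  qed (use assms a in simp)
qed simp

lemma peels_insert_Cons_axis:
  assumes "x \<notin> set A" "distinct A" "x \<notin> set u"
  shows "peels (u @ x # w) (x # A) \<longleftrightarrow> u = take (length u) (rev A) \<and> peels (u @ w) A"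
  using assms
proof (induction u arbitrary: A)
  case Nil
  then show ?case
    by (cases A rule: rev_cases) auto
next
  case (Cons y u)
  show ?case
  proof (cases A rule: rev_cases)
    case Nil
    then show ?thesis using Cons.prems by simp
  next
    case (snoc B z)
    with Cons.prems have B: "x \<notin> set B" "distinct B" "x \<noteq> y" "z \<notin> set B"
      by auto
    have "peels ((y # u) @ x # w) (x # A) \<longleftrightarrow> z = y \<and> peels (u @ x # w) (x # B)"
      using snoc B(3) by simp
    moreover have "y # u = take (length (y # u)) (rev A) \<longleftrightarrow> y = z \<and> u = take (length u) (rev B)"
      using snoc by simp
    moreover have "peels ((y # u) @ w) A \<longleftrightarrow> peels (u @ w) B" if "y = z"
      using snoc that B(4) by (cases B) auto
    ultimately show ?thesis
      using Cons.IH[OF B(1,2)] Cons.prems(3) by auto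
  qed
qed

lemma peels_insert_snoc_axis:
  assumes "x \<notin> set A" "distinct A" "x \<notin> set u"
  shows "peels (u @ x # w) (A @ [x]) \<longleftrightarrow> u = take (length u) A \<and> peels (u @ w) A"
  using peels_insert_Cons_axis[of x "rev A" u w] assms peels_rev[of _ "x # rev A"] peels_rev[of _ A]
  by simp

definition common_axis :: "'a set \<Rightarrow> nat \<Rightarrow> 'a list \<Rightarrow> 'a list \<Rightarrow> bool" where
  "common_axis C a v w \<longleftrightarrow>
     (\<exists>A\<in>permutations_of_set C. peels v A \<and> peels w A \<and> take a w = take a (rev A))"

definition common_axis_pairs :: "'a set \<Rightarrow> nat \<Rightarrow> ('a list \<times> 'a list) set" where
  "common_axis_pairs C a =
     {(v, w) \<in> permutations_of_set C \<times> permutations_of_set C. common_axis C a v w}"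

lemma ex_axis_peeled_by_Cons:
  assumes "x \<notin> C"
  shows "(\<exists>A\<in>permutations_of_set (insert x C). peels (x # v) A \<and> Q A) \<longleftrightarrow>
         (\<exists>A\<in>permutations_of_set C. peels v A \<and> (Q (x # A) \<or> Q (A @ [x])))"
proof
  assume "\<exists>A\<in>permutations_of_set (insert x C). peels (x # v) A \<and> Q A"
  then obtain A where A: "A \<in> permutations_of_set (insert x C)" "peels (x # v) A" "Q A"
    by blast
  then obtain A' where A': "A = x # A' \<or> A = A' @ [x]" "peels v A'"
    using peels_Cons_iff[of x v A] by blast
  have "A' \<in> permutations_of_set C"
    using A(1) A'(1) assms by (auto simp: permutations_of_set_def)
  with A A' show "\<exists>A\<in>permutations_of_set C. peels v A \<and> (Q (x # A) \<or> Q (A @ [x]))"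
    by blast
next
  assume "\<exists>A\<in>permutations_of_set C. peels v A \<and> (Q (x # A) \<or> Q (A @ [x]))"
  then obtain A where A: "A \<in> permutations_of_set C" "peels v A" "Q (x # A) \<or> Q (A @ [x])"
    by blast
  moreover have "x # A \<in> permutations_of_set (insert x C)" "A @ [x] \<in> permutations_of_set (insert x C)"
    using A(1) assms by (auto simp: permutations_of_set_def)
  moreover have "peels (x # v) (x # A)" "peels (x # v) (A @ [x])"
    using A(2) by simp_all
  ultimately show "\<exists>A\<in>permutations_of_set (insert x C). peels (x # v) A \<and> Q A"
    by blast
qed

lemma peels_insert_at_Cons_axis_iff:
  assumes "x \<notin> set A" "distinct A" "x \<notin> set w" "length w = length A" "p \<le> length w"
  shows "peels (insert_at p x w) (x # A) \<and> take a (insert_at p x w) = take a (rev (x # A))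
     \<longleftrightarrow> peels w A \<and> take p w = take p (rev A) \<and> (a \<le> p \<or> p = length w)"
proof -
  have u: "length (take p w) = p" "x \<notin> set (take p w)"
    using assms(3,5) by (auto dest: in_set_takeD)
  have "take a (insert_at p x w) = take a (rev (x # A)) \<longleftrightarrow> a \<le> p \<or> p = length w"
    if "take p w = take p (rev A)"
  proof -
    have "take a (insert_at p x w) = take a (rev (x # A)) \<longleftrightarrow>
        take a (take p w @ x # drop p w) = take a (take p w @ drop p (rev A) @ [x])"
      using that by (metis append_assoc append_take_drop_id insert_at_def rev.simps(2))
    also have "\<dots> \<longleftrightarrow> a \<le> length (take p w) \<or> drop p (rev A) = []"
      by (rule take_append_Cons_eq_iff) (use assms(1,4) in \<open>auto dest: in_set_dropD\<close>)
    finally show ?thesis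
      using u(1) assms(4,5) by auto
  qed
  moreover have "peels (insert_at p x w) (x # A) \<longleftrightarrow> take p w = take p (rev A) \<and> peels w A"
    using peels_insert_Cons_axis[OF assms(1,2) u(2), of "drop p w"] u(1) by (simp add: insert_at_def)
  ultimately show ?thesis
    by blast
qed

lemma peels_insert_at_snoc_axis_iff:
  assumes "x \<notin> set A" "distinct A" "x \<notin> set w" "p \<le> length w"
  shows "peels (insert_at p x w) (A @ [x]) \<and> take (Suc a) (insert_at p x w) = take (Suc a) (rev (A @ [x]))
     \<longleftrightarrow> p = 0 \<and> peels w A \<and> take a w = take a (rev A)"
proof (cases p)
  case 0
  then show ?thesis
    using peels_insert_snoc_axis[OF assms(1,2), of "[]" w] by (simp add: insert_at_def)
next
  case (Suc p')
  with assms(3,4) obtain y where "take p w = y # take p' (tl w)" "y \<noteq> x"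
    by (cases w) auto
  then show ?thesis
    using Suc by (simp add: insert_at_def)
qed

lemma common_axis_Cons_insert_at_iff:
  assumes "x \<notin> C" "v \<in> permutations_of_set C" "w \<in> permutations_of_set C" "p \<le> card C"
  shows "common_axis (insert x C) (Suc a) (x # v) (insert_at p x w) \<longleftrightarrow>
         (p = 0 \<and> common_axis C a v w) \<or> ((Suc a \<le> p \<or> p = card C) \<and> common_axis C p v w)"
proof -
  have w: "x \<notin> set w" "length w = card C" "p \<le> length w"
    using assms length_finite_permutations_of_set[OF assms(3)] by (auto simp: permutations_of_set_def)
  have "peels (insert_at p x w) (x # A) \<and> take (Suc a) (insert_at p x w) = take (Suc a) (rev (x # A))
      \<longleftrightarrow> peels w A \<and> take p w = take p (rev A) \<and> (Suc a \<le> p \<or> p = card C)" (is "?Cons A")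
    "peels (insert_at p x w) (A @ [x]) \<and> take (Suc a) (insert_at p x w) = take (Suc a) (rev (A @ [x]))
      \<longleftrightarrow> p = 0 \<and> peels w A \<and> take a w = take a (rev A)" (is "?snoc A")
    if "A \<in> permutations_of_set C" for A
  proof -
    have "x \<notin> set A" "distinct A" "length w = length A"
      using that assms(1) w(2) length_finite_permutations_of_set[OF that]
      by (auto simp: permutations_of_set_def)
    then show "?Cons A" "?snoc A"
      using w peels_insert_at_Cons_axis_iff[of x A w p "Suc a"]
        peels_insert_at_snoc_axis_iff[of x A w p a] by simp_all
  qed
  then show ?thesis
    unfolding common_axis_def ex_axis_peeled_by_Cons[OF assms(1)] by blast
qed

lemma permutation_pairs_split:
  assumes "finite C" "card C = Suc m"
  shows "{(v, w) \<in> permutations_of_set C \<times> permutations_of_set C. P v w} =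
    (\<Union>x\<in>C. \<Union>p\<le>m. (\<lambda>(v, w). (x # v, insert_at p x w)) `
       {(v, w) \<in> permutations_of_set (C - {x}) \<times> permutations_of_set (C - {x}).
          P (x # v) (insert_at p x w)})" (is "?lhs = ?rhs")
proof (intro equalityI subsetI)
  fix z
  assume "z \<in> ?lhs"
  then obtain v w where z: "z = (v, w)" "v \<in> permutations_of_set C" "w \<in> permutations_of_set C" "P v w"
    by blast
  have "C \<noteq> {}"
    using assms by auto
  with z(2) obtain x v' where v: "v = x # v'" "x \<in> C" "v' \<in> permutations_of_set (C - {x})"
    using permutations_of_set_nonempty[of C] by blast
  have "x \<in> set w"
    using z(3) v(2) by (simp add: permutations_of_set_def)
  then obtain u w' where w: "w = u @ x # w'"
    by (meson split_list)
  have w': "u @ w' \<in> permutations_of_set (C - {x})"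
    using z(3) w by (auto simp: permutations_of_set_def)
  then have "length u \<le> m"
    using length_finite_permutations_of_set[OF w'] assms v(2) by simp
  moreover have "insert_at (length u) x (u @ w') = w"
    by (simp add: insert_at_def w)
  ultimately show "z \<in> ?rhs"
    using z v w' by (intro UN_I[of x] UN_I[of "length u"] image_eqI[of _ _ "(v', u @ w')"]) auto
next
  fix z
  assume "z \<in> ?rhs"
  then obtain x p v w where "x \<in> C" "z = (x # v, insert_at p x w)" "P (x # v) (insert_at p x w)"
      "v \<in> permutations_of_set (C - {x})" "w \<in> permutations_of_set (C - {x})"
    by auto
  moreover from this have "insert_at p x w \<in> permutations_of_set C"
    using insert_at_in_permutations_of_set[of x "C - {x}" w p] by (simp add: insert_absorb)
  ultimately show "z \<in> ?lhs"
    by (auto simp: permutations_of_set_def)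
qed

lemma card_permutation_pairs_split:
  assumes "finite C" "card C = Suc m"
  shows "card {(v, w) \<in> permutations_of_set C \<times> permutations_of_set C. P v w} =
    (\<Sum>x\<in>C. \<Sum>p\<le>m. card {(v, w) \<in> permutations_of_set (C - {x}) \<times> permutations_of_set (C - {x}).
       P (x # v) (insert_at p x w)})"
proof -
  define S where "S x p = {(v, w) \<in> permutations_of_set (C - {x}) \<times> permutations_of_set (C - {x}).
       P (x # v) (insert_at p x w)}" for x p
  define g where "g x p = (\<lambda>(v, w). (x # v, insert_at p x w))" for x :: 'a and p :: nat
  have S: "x \<notin> set w" "length w = m" if "(v, w) \<in> S x p" "x \<in> C" for x p v w
    using that assms length_finite_permutations_of_set[of w "C - {x}"]
    by (auto simp: S_def permutations_of_set_def)
  have fin: "finite (S x p)" for x p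
    by (rule finite_subset[of _ "permutations_of_set (C - {x}) \<times> permutations_of_set (C - {x})"])
      (auto simp: S_def)
  have g_eq: "p = q \<and> (v, w) = (v', w')"
    if "x \<in> C" "p \<le> m" "q \<le> m" "(v, w) \<in> S x p" "(v', w') \<in> S x q"
      "g x p (v, w) = g x q (v', w')" for x p q v w v' w'
    using that S[of v w x p] S[of v' w' x q] insert_at_eq_iff[of x w w' p q] by (simp add: g_def)
  have inj: "inj_on (g x p) (S x p)" if "x \<in> C" "p \<le> m" for x p
    using that g_eq by (auto intro!: inj_onI)
  have disj_p: "g x p ` S x p \<inter> g x q ` S x q = {}" if "x \<in> C" "p \<le> m" "q \<le> m" "p \<noteq> q" for x p q
    using that g_eq by fastforce
  have "card (\<Union>x\<in>C. \<Union>p\<le>m. g x p ` S x p) = (\<Sum>x\<in>C. card (\<Union>p\<le>m. g x p ` S x p))"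
    by (rule card_UN_disjoint) (auto simp: assms(1) fin g_def)
  also have "\<dots> = (\<Sum>x\<in>C. \<Sum>p\<le>m. card (g x p ` S x p))"
    by (intro sum.cong refl card_UN_disjoint) (auto simp: fin disj_p)
  also have "\<dots> = (\<Sum>x\<in>C. \<Sum>p\<le>m. card (S x p))"
    by (intro sum.cong refl card_image inj) auto
  finally show ?thesis
    unfolding permutation_pairs_split[OF assms] S_def g_def .
qed

definition binomial_band :: "nat \<Rightarrow> nat \<Rightarrow> nat" where
  "binomial_band K a = (\<Sum>j\<le>a. (2 * K + a) choose (K + j))"

definition common_axis_weight :: "nat \<Rightarrow> nat \<Rightarrow> nat" where
  "common_axis_weight m a = (if m \<le> a then 2 ^ (m - 1) else binomial_band (m - 1 - a) a)"

lemma binomial_band_0: "binomial_band 0 a = 2 ^ a"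
  by (simp add: binomial_band_def choose_row_sum)

lemma binomial_band_Suc_Suc:
  "binomial_band (Suc K) (Suc a) = binomial_band K (a + 2) + binomial_band (Suc K) a"
proof -
  define N where "N = 2 * K + a + 2"
  define t where "t = N choose Suc (K + Suc a)"
  have "binomial_band (Suc K) (Suc a) = (\<Sum>j\<le>Suc a. Suc N choose Suc (K + j))"
    unfolding binomial_band_def by (rule sum.cong) (simp_all add: N_def del: binomial_Suc_Suc)
  also have "\<dots> = (\<Sum>j\<le>Suc a. N choose (K + j)) + (\<Sum>j\<le>Suc a. N choose Suc (K + j))"
    by (simp add: sum.distrib)
  finally have 1: "binomial_band (Suc K) (Suc a)
      = (\<Sum>j\<le>Suc a. N choose (K + j)) + (\<Sum>j\<le>Suc a. N choose Suc (K + j))" .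
  have "binomial_band K (a + 2) = (\<Sum>j\<le>Suc (Suc a). N choose (K + j))"
    unfolding binomial_band_def by (rule sum.cong) (simp_all add: N_def del: binomial_Suc_Suc)
  also have "\<dots> = (\<Sum>j\<le>Suc a. N choose (K + j)) + t"
    by (simp only: sum.atMost_Suc t_def) simp
  finally have 2: "binomial_band K (a + 2) = (\<Sum>j\<le>Suc a. N choose (K + j)) + t" .
  have "(\<Sum>j\<le>Suc a. N choose Suc (K + j)) = (\<Sum>j\<le>a. N choose Suc (K + j)) + t"
    by (simp only: sum.atMost_Suc t_def)
  also have "(\<Sum>j\<le>a. N choose Suc (K + j)) = binomial_band (Suc K) a"
    unfolding binomial_band_def by (rule sum.cong) (simp_all add: N_def del: binomial_Suc_Suc)
  finally show ?thesis
    using 1 2 by simp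
qed

lemma common_axis_weight_Suc_Suc_less:
  assumes "a < m"
  shows "common_axis_weight (Suc m) (Suc a)
       = common_axis_weight m a + (\<Sum>p = Suc a..m. common_axis_weight m p)"
  using assms
proof (induction "m - Suc a" arbitrary: a)
  case 0
  then have m: "m = Suc a"
    by simp
  then show ?case
    by (simp add: common_axis_weight_def binomial_band_0)
next
  case (Suc d)
  then have "Suc a < m"
    by simp
  then obtain K where K: "m - Suc a = Suc K"
    by (metis Suc_diff_Suc zero_less_diff)
  have "common_axis_weight (Suc m) (Suc a) = common_axis_weight m a + common_axis_weight (Suc m) (Suc (Suc a))"
  proof -
    have "m - Suc (Suc a) = K"
      using K by arith
    then show ?thesis
      using K \<open>Suc a < m\<close> binomial_band_Suc_Suc[of K a]
      by (simp add: common_axis_weight_def numeral_2_eq_2)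
  qed
  also have "common_axis_weight (Suc m) (Suc (Suc a))
      = common_axis_weight m (Suc a) + (\<Sum>p = Suc (Suc a)..m. common_axis_weight m p)"
    using Suc.hyps(1)[of "Suc a"] Suc.hyps(2) \<open>Suc a < m\<close> by simp
  also have "common_axis_weight m (Suc a) + (\<Sum>p = Suc (Suc a)..m. common_axis_weight m p)
      = (\<Sum>p = Suc a..m. common_axis_weight m p)"
    using \<open>Suc a < m\<close> by (simp add: sum.atLeast_Suc_atMost)
  finally show ?case .
qed

lemma common_axis_weight_Suc_Suc:
  assumes "1 \<le> m" "a \<le> m"
  shows "common_axis_weight (Suc m) (Suc a)
       = common_axis_weight m a + (\<Sum>p\<in>insert m {Suc a..m}. common_axis_weight m p)"
proof (cases "a = m")
  case True
  with assms(1) show ?thesis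
    by (cases m) (simp_all add: common_axis_weight_def)
next
  case False
  with assms(2) have "insert m {Suc a..m} = {Suc a..m}"
    by auto
  with False assms(2) show ?thesis
    using common_axis_weight_Suc_Suc_less by simp
qed

lemma common_axis_weight_0_eq_1: "1 \<le> m \<Longrightarrow> common_axis_weight m 0 = common_axis_weight m 1"
proof (cases "m = 1")
  case False
  assume "1 \<le> m"
  with False obtain K where "m = Suc (Suc K)"
    by (metis One_nat_def Suc_le_D le_antisym not_less_eq_eq)
  then show ?thesis
    by (simp add: common_axis_weight_def binomial_band_def)
qed (simp add: common_axis_weight_def binomial_band_def)

lemma common_axis_weight_Suc_0: "common_axis_weight (Suc m) 0 = (2 * m) choose m"
  by (simp add: common_axis_weight_def binomial_band_def)

lemma card_common_axis_pairs_Suc: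
  assumes "finite C" "card C = Suc m" "1 \<le> m" "a \<le> m"
    and IH: "\<And>x k. x \<in> C \<Longrightarrow> k \<le> m \<Longrightarrow>
      card (common_axis_pairs (C - {x}) k) = fact m * common_axis_weight m k"
  shows "card (common_axis_pairs C (Suc a)) = fact (Suc m) * common_axis_weight (Suc m) (Suc a)"
proof -
  let ?W = "common_axis_weight m"
  define h where "h p = (if p = 0 then ?W a else if Suc a \<le> p \<or> p = m then ?W p else 0)" for p
  have piece: "card {(v, w) \<in> permutations_of_set (C - {x}) \<times> permutations_of_set (C - {x}).
      common_axis C (Suc a) (x # v) (insert_at p x w)} = fact m * h p"
    if "x \<in> C" "p \<le> m" for x p
  proof -
    have C: "insert x (C - {x}) = C" "card (C - {x}) = m" "x \<notin> C - {x}"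
      using that assms(1,2) by auto
    have "{(v, w) \<in> permutations_of_set (C - {x}) \<times> permutations_of_set (C - {x}).
        common_axis C (Suc a) (x # v) (insert_at p x w)}
      = (if p = 0 then common_axis_pairs (C - {x}) a
         else if Suc a \<le> p \<or> p = m then common_axis_pairs (C - {x}) p else {})"
      using common_axis_Cons_insert_at_iff[OF C(3), of _ _ p a] C(1,2) that(2) assms(3)
      unfolding common_axis_pairs_def by auto
    then show ?thesis
      using IH[OF that(1)] that(2) assms(4) by (simp add: h_def)
  qed
  have "{..m} = insert 0 {1..m}" "{p \<in> {1..m}. Suc a \<le> p \<or> p = m} = insert m {Suc a..m}"
    using assms(3) by auto
  then have "(\<Sum>p\<le>m. h p) = ?W a + (\<Sum>p\<in>insert m {Suc a..m}. ?W p)"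
    by (simp add: h_def sum.inter_filter[symmetric])
  also have "\<dots> = common_axis_weight (Suc m) (Suc a)"
    using common_axis_weight_Suc_Suc[OF assms(3,4)] by simp
  finally have "(\<Sum>p\<le>m. h p) = common_axis_weight (Suc m) (Suc a)" .
  moreover have "card (common_axis_pairs C (Suc a)) = (\<Sum>x\<in>C. \<Sum>p\<le>m. fact m * h p)"
    unfolding common_axis_pairs_def card_permutation_pairs_split[OF assms(1,2)]
    using piece by (intro sum.cong) auto
  ultimately show ?thesis
    using assms(2) by (simp add: algebra_simps flip: sum_distrib_left)
qed

lemma common_axis_0_iff_1:
  assumes "w \<in> permutations_of_set C" "C \<noteq> {}"
  shows "common_axis C 0 v w \<longleftrightarrow> common_axis C 1 v w"
proof
  assume "common_axis C 0 v w"
  then obtain A where A: "A \<in> permutations_of_set C" "peels v A" "peels w A"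
    unfolding common_axis_def by blast
  obtain y w' where w: "w = y # w'"
    using assms by (cases w) (auto simp: permutations_of_set_def)
  with A(3) obtain A' where "A = y # A' \<or> A = A' @ [y]"
    by (metis peels_Cons_iff)
  then show "common_axis C 1 v w"
  proof
    assume "A = y # A'"
    moreover have "rev A \<in> permutations_of_set C" "peels v (rev A)" "peels w (rev A)"
      using A by (auto simp: permutations_of_set_def peels_rev)
    ultimately show ?thesis
      unfolding common_axis_def using w by (metis rev_rev_ident take_Suc_Cons take_0 One_nat_def)
  next
    assume "A = A' @ [y]"
    then show ?thesis
      unfolding common_axis_def using A w by auto
  qed
qed (auto simp: common_axis_def)

lemma card_common_axis_pairs:
  assumes "finite C" "card C = Suc m" "a \<le> Suc m"
  shows "card (common_axis_pairs C a) = fact (Suc m) * common_axis_weight (Suc m) a"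
  using assms
proof (induction m arbitrary: C a)
  case 0
  then obtain c where "C = {c}"
    using card_1_singletonE by auto
  then have "common_axis_pairs C a = {([c], [c])}"
    by (auto simp: common_axis_pairs_def common_axis_def)
  moreover have "common_axis_weight 1 a = 1"
    using 0 by (cases a) (auto simp: common_axis_weight_def binomial_band_def)
  ultimately show ?case
    by simp
next
  case (Suc m)
  have IH: "card (common_axis_pairs (C - {x}) k) = fact (Suc m) * common_axis_weight (Suc m) k"
    if "x \<in> C" "k \<le> Suc m" for x k
    using Suc that by (intro Suc.IH) auto
  show ?case
  proof (cases a)
    case 0
    have "C \<noteq> {}"
      using Suc.prems(2) by auto
    then have "common_axis_pairs C 0 = common_axis_pairs C 1"
      unfolding common_axis_pairs_def using common_axis_0_iff_1 by blast
    then show ?thesis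
      using card_common_axis_pairs_Suc[OF Suc.prems(1,2) _ _ IH, of 0] 0
        common_axis_weight_0_eq_1[of "Suc (Suc m)"] by simp
  next
    case (Suc a')
    then show ?thesis
      using card_common_axis_pairs_Suc[OF Suc.prems(1,2) _ _ IH, of a'] Suc.prems(3) by simp
  qed
qed

lemma card_peeling_profiles_2:
  assumes "finite C" "card C = Suc m"
  shows "card (peeling_profiles (permutations_of_set C) (permutations_of_set C) 2)
       = fact (Suc m) * ((2 * m) choose m)"
proof -
  have "peeling_profiles (permutations_of_set C) (permutations_of_set C) 2
      = (\<lambda>(v, w). [v, w]) ` common_axis_pairs C 0"
  proof (intro equalityI subsetI)
    fix Ps
    assume Ps: "Ps \<in> peeling_profiles (permutations_of_set C) (permutations_of_set C) 2"
    then obtain v w where "Ps = [v, w]"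
      unfolding peeling_profiles_def by (auto simp: numeral_eq_Suc length_Suc_conv)
    with Ps have "(v, w) \<in> common_axis_pairs C 0"
      by (auto simp: peeling_profiles_def common_axis_pairs_def common_axis_def)
    with \<open>Ps = [v, w]\<close> show "Ps \<in> (\<lambda>(v, w). [v, w]) ` common_axis_pairs C 0"
      by force
  qed (auto simp: peeling_profiles_def common_axis_pairs_def common_axis_def)
  moreover have "inj_on (\<lambda>(v, w). [v, w]) (common_axis_pairs C 0)"
    by (auto simp: inj_on_def)
  ultimately show ?thesis
    using card_common_axis_pairs[OF assms, of 0] by (simp add: card_image common_axis_weight_Suc_0)
qed

theorem mainTheorem8:
  shows "(\<forall>m::nat. m \<ge> 1 \<longrightarrow> a_sp 2 m = fact m * ((2*m - 2) choose (m - 1)))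
       \<and> (\<forall>n::nat. n \<ge> 1 \<longrightarrow> a_sp n 3 = 6 * 2^(n-1) * (2^n - 1))
       \<and> (\<forall>n::nat. n \<ge> 1 \<longrightarrow> a_sp n 4 = 24 * 4^(n-1) * (2^(n+1) - 3))"
proof (intro conjI allI impI)
  fix m :: nat
  assume "m \<ge> 1"
  then obtain k where "m = Suc k"
    by (cases m) auto
  then show "a_sp 2 m = fact m * ((2*m - 2) choose (m - 1))"
    using card_single_peaked_elections[of "{1..m}" 2] card_peeling_profiles_2[of "{1..m}" k]
    by (simp add: a_sp_def)
next
  fix n :: nat
  assume "n \<ge> 1"
  then obtain k where "n = Suc k"
    by (cases n) auto
  then show "a_sp n 3 = 6 * 2^(n-1) * (2^n - 1)" "a_sp n 4 = 24 * 4^(n-1) * (2^(n+1) - 3)"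
    using card_single_peaked_elections[of "{1..3::nat}" n] card_peeling_profiles_3[of k]
      card_single_peaked_elections[of "{1..4::nat}" n] card_peeling_profiles_4[of k]
    by (simp_all add: a_sp_def)
qed

end
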